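(* Let $\rho$ be an $i$-polymatroid on a finite set $E$ and let $\rho^*$ be its $i$-dual. If $M_1,\dots,M_i$ are matroids on $E$ with $\rho=r_{M_1}+\cdots+r_{M_i}$, then $\rho^*=r_{M_1^*}+\cdots+r_{M_i^*}$. More generally, if $k\ge i$ and $M_1,\dots,M_k$ are matroids on $E$ with $\rho=r_{M_1}+\cdots+r_{M_k}$, then there are matroids $M'_1,\dots,M'_k$ on $E$ with $\rho^*=r_{M'_1}+\cdots+r_{M'_k}$ such that, for every $s\in[k]$, the matroid obtained from $M'_s$ by deleting its loops and coloops is the dual of the matroid obtained from $M_s$ by deleting its loops and coloops. Consequently, if $\min(\chi(\rho),\chi(\rho^* ))\ge i$, then $\chi(\rho)=\chi(\rho^* )$.
   Context: A polymatroid on $E$ is a function $\rho:2^E\to\mathbb{Z}$ that is normalized, non-decreasing and submodular; it is an $i$-polymatroid if $\rho(\{e\})\le i$ for all $e\in E$. The $i$-dual of an $i$-polymatroid $\rho$ is $\rho^*(X)=i|X|-\rho(E)+\rho(E-X)$ for $X\subseteq E$. $M^*$ denotes the dual matroid. The chromatic number $\chi(\rho)$ is the least positive integer $k$ such that $\rho=r_{M_1}+\cdots+r_{M_k}$ for some matroids $M_1,\dots,M_k$ on $E$, and $\infty$ if there is no such $k$. *)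

theory Defs
  imports "HOL-Library.Extended_Nat"
begin

text \<open>A matroid on the finite ground set E is represented by its rank function
  (only its values on subsets of E matter), via the standard rank axioms.\<close>

definition is_matroid_rank :: "'a set \<Rightarrow> ('a set \<Rightarrow> int) \<Rightarrow> bool" where
  "is_matroid_rank E r \<longleftrightarrow>
     (\<forall>X. X \<subseteq> E \<longrightarrow> 0 \<le> r X \<and> r X \<le> int (card X)) \<and>
     (\<forall>X Y. X \<subseteq> Y \<and> Y \<subseteq> E \<longrightarrow> r X \<le> r Y) \<and>
     (\<forall>X Y. X \<subseteq> E \<and> Y \<subseteq> E \<longrightarrow> r (X \<union> Y) + r (X \<inter> Y) \<le> r X + r Y)"

definition dual_rank :: "'a set \<Rightarrow> ('a set \<Rightarrow> int) \<Rightarrow> 'a set \<Rightarrow> int" where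
  "dual_rank E r X = int (card X) - r E + r (E - X)"

definition loops :: "'a set \<Rightarrow> ('a set \<Rightarrow> int) \<Rightarrow> 'a set" where
  "loops E r = {e \<in> E. r {e} = 0}"

definition coloops :: "'a set \<Rightarrow> ('a set \<Rightarrow> int) \<Rightarrow> 'a set" where
  "coloops E r = {e \<in> E. r (E - {e}) = r E - 1}"

text \<open>Ground set of the matroid obtained by deleting all loops and coloops.
  The deletion M \ D has ground set E - D and rank function r restricted to subsets of E - D.\<close>
definition core_ground :: "'a set \<Rightarrow> ('a set \<Rightarrow> int) \<Rightarrow> 'a set" where
  "core_ground E r = E - (loops E r \<union> coloops E r)"

definition same_matroid :: "'a set \<Rightarrow> ('a set \<Rightarrow> int) \<Rightarrow> ('a set \<Rightarrow> int) \<Rightarrow> bool" where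
  "same_matroid F r1 r2 \<longleftrightarrow> (\<forall>X. X \<subseteq> F \<longrightarrow> r1 X = r2 X)"

definition is_polymatroid :: "'a set \<Rightarrow> ('a set \<Rightarrow> int) \<Rightarrow> bool" where
  "is_polymatroid E \<rho> \<longleftrightarrow>
     \<rho> {} = 0 \<and>
     (\<forall>X Y. X \<subseteq> Y \<and> Y \<subseteq> E \<longrightarrow> \<rho> X \<le> \<rho> Y) \<and>
     (\<forall>X Y. X \<subseteq> E \<and> Y \<subseteq> E \<longrightarrow> \<rho> (X \<union> Y) + \<rho> (X \<inter> Y) \<le> \<rho> X + \<rho> Y)"

definition is_i_polymatroid :: "nat \<Rightarrow> 'a set \<Rightarrow> ('a set \<Rightarrow> int) \<Rightarrow> bool" where
  "is_i_polymatroid i E \<rho> \<longleftrightarrow> is_polymatroid E \<rho> \<and> (\<forall>e\<in>E. \<rho> {e} \<le> int i)"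

definition i_dual :: "nat \<Rightarrow> 'a set \<Rightarrow> ('a set \<Rightarrow> int) \<Rightarrow> 'a set \<Rightarrow> int" where
  "i_dual i E \<rho> X = int i * int (card X) - \<rho> E + \<rho> (E - X)"

definition sum_of_matroids :: "'a set \<Rightarrow> ('a set \<Rightarrow> int) \<Rightarrow> nat \<Rightarrow> (nat \<Rightarrow> 'a set \<Rightarrow> int) \<Rightarrow> bool" where
  "sum_of_matroids E \<rho> k M \<longleftrightarrow>
     (\<forall>s<k. is_matroid_rank E (M s)) \<and> (\<forall>X. X \<subseteq> E \<longrightarrow> \<rho> X = (\<Sum>s<k. M s X))"

definition chromatic_number :: "'a set \<Rightarrow> ('a set \<Rightarrow> int) \<Rightarrow> enat" where
  "chromatic_number E \<rho> =
     (if \<exists>k>0. \<exists>M. sum_of_matroids E \<rho> k M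
      then enat (LEAST k. k > 0 \<and> (\<exists>M. sum_of_matroids E \<rho> k M))
      else \<infinity>)"

end

(*
  Summing the dual ranks r*(X) = |X| - r(E) + r(E - X) over a decomposition
  rho = r_1 + ... + r_k gives k|X| - rho(E) + rho(E - X), which is rho*(X) + (k - i)|X|;
  for k = i this is already the first claim.  As rho({e}) <= i counts the M_s in which e is
  not a loop, every e is a loop of at least k - i of the M_s.  Choosing k - i of them for
  each e and turning e, a coloop of M_s*, into a loop of M_s* removes exactly (k - i)|X|,
  and exchanging coloops for loops does not affect the matroid left after deleting both.
  Since rho** = rho and rho*({e}) <= i, decompositions into k >= i matroids thus transfer in
  both directions, so chromatic numbers that are at least i coincide.
*)

theory Submission
  imports Defs
begin

section \<open>Loops, coloops and duality\<close>

lemma loops_subset: "loops E r \<subseteq> E"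
  by (auto simp: loops_def)

lemma coloops_subset: "coloops E r \<subseteq> E"
  by (auto simp: coloops_def)

lemma dual_rank_empty [simp]: "dual_rank E r {} = 0"
  by (simp add: dual_rank_def)

lemma loops_dual_rank: "loops E (dual_rank E r) = coloops E r"
  by (auto simp: loops_def coloops_def dual_rank_def)

locale finite_matroid =
  fixes E :: "'a set" and r :: "'a set \<Rightarrow> int"
  assumes finite_ground: "finite E" and matroid_rank: "is_matroid_rank E r"
begin

lemma finite_subset_ground: "X \<subseteq> E \<Longrightarrow> finite X"
  by (rule finite_subset[OF _ finite_ground])

lemma rank_nonneg: "X \<subseteq> E \<Longrightarrow> 0 \<le> r X"
  using matroid_rank unfolding is_matroid_rank_def by blast

lemma rank_le_card: "X \<subseteq> E \<Longrightarrow> r X \<le> int (card X)"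
  using matroid_rank unfolding is_matroid_rank_def by blast

lemma rank_mono: "X \<subseteq> Y \<Longrightarrow> Y \<subseteq> E \<Longrightarrow> r X \<le> r Y"
  using matroid_rank unfolding is_matroid_rank_def by blast

lemma rank_submod: "X \<subseteq> E \<Longrightarrow> Y \<subseteq> E \<Longrightarrow> r (X \<union> Y) + r (X \<inter> Y) \<le> r X + r Y"
  using matroid_rank unfolding is_matroid_rank_def by blast

lemma rank_empty [simp]: "r {} = 0"
  using rank_nonneg[of "{}"] rank_le_card[of "{}"] by simp

lemma rank_insert_loop:
  assumes "Y \<subseteq> E" and "e \<in> loops E r"
  shows "r (insert e Y) = r Y"
proof -
  have e: "e \<in> E" "r {e} = 0" using assms(2) by (auto simp: loops_def)
  have "r (Y \<union> {e}) + r (Y \<inter> {e}) \<le> r Y + r {e}"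
    by (intro rank_submod) (use assms(1) e(1) in auto)
  moreover have "0 \<le> r (Y \<inter> {e})" using rank_nonneg assms(1) by blast
  moreover have "r Y \<le> r (insert e Y)" using rank_mono assms(1) e(1) by blast
  ultimately show ?thesis using e(2) by simp
qed

lemma rank_insert_coloop:
  assumes "Y \<subseteq> E" and "e \<in> coloops E r" and "e \<notin> Y"
  shows "r (insert e Y) = r Y + 1"
proof -
  have e: "e \<in> E" "r (E - {e}) = r E - 1" using assms(2) by (auto simp: coloops_def)
  have "r (Y \<union> {e}) + r (Y \<inter> {e}) \<le> r Y + r {e}"
    by (intro rank_submod) (use assms(1) e(1) in auto)
  moreover have "r {e} \<le> 1" using rank_le_card[of "{e}"] e(1) by simp
  moreover have "r (insert e Y \<union> (E - {e})) + r (insert e Y \<inter> (E - {e}))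
      \<le> r (insert e Y) + r (E - {e})"
    by (intro rank_submod) (use assms(1) e(1) in auto)
  moreover have "insert e Y \<union> (E - {e}) = E" "insert e Y \<inter> (E - {e}) = Y"
    using assms e(1) by auto
  ultimately show ?thesis using assms(3) e(2) by simp
qed

lemma rank_Un_loops:
  assumes "Y \<subseteq> E" and "L \<subseteq> loops E r"
  shows "r (Y \<union> L) = r Y"
proof -
  have "finite L" using assms(2) loops_subset[of E r] by (blast intro: finite_subset_ground)
  then show ?thesis using assms
  proof (induction L rule: finite_induct)
    case (insert e L)
    have "Y \<union> L \<subseteq> E" using insert.prems loops_subset[of E r] by blast
    then show ?case using insert by (simp add: rank_insert_loop)
  qed simp
qed

lemma rank_Un_coloops:
  assumes "Y \<subseteq> E" and "K \<subseteq> coloops E r" and "Y \<inter> K = {}"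
  shows "r (Y \<union> K) = r Y + int (card K)"
proof -
  have "finite K" using assms(2) coloops_subset[of E r] by (blast intro: finite_subset_ground)
  then show ?thesis using assms
  proof (induction K rule: finite_induct)
    case (insert e K)
    have "Y \<union> K \<subseteq> E" using insert.prems coloops_subset[of E r] by blast
    then have "r (insert e (Y \<union> K)) = r (Y \<union> K) + 1"
      using insert by (intro rank_insert_coloop) auto
    then show ?case using insert by simp
  qed simp
qed

lemma coloops_dual_rank: "coloops E (dual_rank E r) = loops E r"
proof -
  have "dual_rank E r (E - {e}) = dual_rank E r E - 1 + r {e}" if "e \<in> E" for e
  proof -
    have "E - (E - {e}) = {e}" using that by auto
    then show ?thesis
      using that finite_ground card_gt_0_iff[of E]
      by (auto simp: dual_rank_def card_Diff_singleton of_nat_diff)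
  qed
  then show ?thesis by (auto simp: loops_def coloops_def)
qed

text \<open>Deleting the loops and coloops of M does not change r(E) - r(E - X) for X inside the
  remaining ground set, so both duals agree there.\<close>
lemma dual_rank_core_ground:
  assumes "X \<subseteq> core_ground E r"
  shows "dual_rank (core_ground E r) r X = dual_rank E r X"
proof -
  let ?C = "core_ground E r"
  have extend: "r (Y \<union> (E - ?C)) = r Y + int (card (coloops E r))" if "Y \<subseteq> ?C" for Y
  proof -
    have "Y \<subseteq> E" "Y \<inter> coloops E r = {}" using that by (auto simp: core_ground_def)
    moreover have "Y \<union> (E - ?C) = (Y \<union> coloops E r) \<union> loops E r"
      by (auto simp: core_ground_def loops_def coloops_def)
    ultimately show ?thesis
      using rank_Un_loops[of "Y \<union> coloops E r" "loops E r"] rank_Un_coloops[of Y "coloops E r"]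
        coloops_subset[of E r] by simp
  qed
  have "?C \<union> (E - ?C) = E" "(?C - X) \<union> (E - ?C) = E - X"
    using assms by (auto simp: core_ground_def)
  then have "r E = r ?C + int (card (coloops E r))"
    and "r (E - X) = r (?C - X) + int (card (coloops E r))"
    using extend[of ?C] extend[of "?C - X"] by auto
  then show ?thesis by (simp add: dual_rank_def)
qed

lemma dual_matroid: "finite_matroid E (dual_rank E r)"
proof (intro finite_matroid.intro finite_ground, unfold is_matroid_rank_def dual_rank_def,
    intro conjI allI impI)
  fix X assume X: "X \<subseteq> E"
  have "(E - X) \<union> X = E" "(E - X) \<inter> X = {}" using X by auto
  then have "r E \<le> r (E - X) + r X"
    using rank_submod[of "E - X" X] X by simp
  then show "0 \<le> int (card X) - r E + r (E - X)" using rank_le_card[OF X] by simp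
  show "int (card X) - r E + r (E - X) \<le> int (card X)" using rank_mono[of "E - X" E] by simp
next
  fix X Y assume XY: "X \<subseteq> Y \<and> Y \<subseteq> E"
  then have "(E - Y) \<union> (Y - X) = E - X" "(E - Y) \<inter> (Y - X) = {}" by auto
  then have "r (E - X) \<le> r (E - Y) + r (Y - X)"
    using rank_submod[of "E - Y" "Y - X"] XY by auto
  moreover have "r (Y - X) \<le> int (card (Y - X))" using XY by (intro rank_le_card) auto
  moreover have "finite X" "finite Y" using XY by (auto intro: finite_subset_ground)
  then have "int (card (Y - X)) = int (card Y) - int (card X)"
    using XY by (simp add: card_Diff_subset card_mono of_nat_diff)
  ultimately show "int (card X) - r E + r (E - X) \<le> int (card Y) - r E + r (E - Y)" by simp
next
  fix X Y assume XY: "X \<subseteq> E \<and> Y \<subseteq> E"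
  have "(E - X) \<union> (E - Y) = E - (X \<inter> Y)" "(E - X) \<inter> (E - Y) = E - (X \<union> Y)" by auto
  then have "r (E - (X \<inter> Y)) + r (E - (X \<union> Y)) \<le> r (E - X) + r (E - Y)"
    using rank_submod[of "E - X" "E - Y"] by auto
  moreover have "finite X" "finite Y" using XY by (auto intro: finite_subset_ground)
  then have "card X + card Y = card (X \<union> Y) + card (X \<inter> Y)"
    by (rule card_Un_Int)
  ultimately show "int (card (X \<union> Y)) - r E + r (E - (X \<union> Y))
      + (int (card (X \<inter> Y)) - r E + r (E - (X \<inter> Y)))
       \<le> int (card X) - r E + r (E - X) + (int (card Y) - r E + r (E - Y))"
    by linarith
qed

lemma deletion_matroid: "finite_matroid E (\<lambda>X. r (X - L))"
proof (intro finite_matroid.intro finite_ground, unfold is_matroid_rank_def, intro conjI allI impI)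
  fix X assume X: "X \<subseteq> E"
  then show "0 \<le> r (X - L)" by (intro rank_nonneg) auto
  have "card (X - L) \<le> card X" using finite_subset_ground[OF X] by (simp add: card_mono)
  moreover have "r (X - L) \<le> int (card (X - L))" using X by (intro rank_le_card) auto
  ultimately show "r (X - L) \<le> int (card X)" by linarith
next
  fix X Y assume "X \<subseteq> Y \<and> Y \<subseteq> E"
  then show "r (X - L) \<le> r (Y - L)" by (auto intro: rank_mono)
next
  fix X Y assume "X \<subseteq> E \<and> Y \<subseteq> E"
  moreover have "X \<union> Y - L = (X - L) \<union> (Y - L)" "X \<inter> Y - L = (X - L) \<inter> (Y - L)" by auto
  ultimately show "r (X \<union> Y - L) + r (X \<inter> Y - L) \<le> r (X - L) + r (Y - L)"
    using rank_submod[of "X - L" "Y - L"] by auto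
qed

end

text \<open>M* with the elements of L made into loops.  When L consists of loops of M, i.e. of
  coloops of M*, this only exchanges coloops for loops.\<close>
definition dual_with_loops :: "'a set \<Rightarrow> ('a set \<Rightarrow> int) \<Rightarrow> 'a set \<Rightarrow> 'a set \<Rightarrow> int" where
  "dual_with_loops E r L X = dual_rank E r (X - L)"

context finite_matroid
begin

lemma dual_with_loops_matroid: "finite_matroid E (dual_with_loops E r L)"
  unfolding dual_with_loops_def using finite_matroid.deletion_matroid[OF dual_matroid] .

context
  fixes L :: "'a set"
  assumes L_loops: "L \<subseteq> loops E r"
begin

lemma dual_with_loops_eq:
  assumes "X \<subseteq> E"
  shows "dual_with_loops E r L X = dual_rank E r X - int (card (X \<inter> L))"
proof -
  have "E - (X - L) = (E - X) \<union> (X \<inter> L)" using assms by blast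
  then have "r (E - (X - L)) = r (E - X)" using rank_Un_loops[of "E - X" "X \<inter> L"] L_loops by auto
  moreover have "card (X - L) = card X - card (X \<inter> L)" "card (X \<inter> L) \<le> card X"
    using finite_subset_ground[OF assms] by (auto simp: card_Diff_subset_Int card_mono)
  ultimately show ?thesis by (simp add: dual_with_loops_def dual_rank_def of_nat_diff)
qed

lemma loops_dual_with_loops: "loops E (dual_with_loops E r L) = L \<union> coloops E r"
proof (rule set_eqI)
  fix e
  show "e \<in> loops E (dual_with_loops E r L) \<longleftrightarrow> e \<in> L \<union> coloops E r"
  proof (cases "e \<in> L")
    case True
    then have "{e} - L = {}" by blast
    then show ?thesis using True L_loops by (auto simp: loops_def dual_with_loops_def)
  next
    case False
    then have "{e} - L = {e}" by blast
    then have "dual_with_loops E r L {e} = dual_rank E r {e}" by (simp add: dual_with_loops_def)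
    then show ?thesis using False by (simp add: loops_def flip: loops_dual_rank[of E r])
  qed
qed

lemma coloops_dual_with_loops: "coloops E (dual_with_loops E r L) = loops E r - L"
proof (rule set_eqI)
  fix e
  show "e \<in> coloops E (dual_with_loops E r L) \<longleftrightarrow> e \<in> loops E r - L"
  proof (cases "e \<in> E - L")
    case True
    then have "(E - {e}) \<inter> L = E \<inter> L" by blast
    then have "dual_with_loops E r L (E - {e}) - dual_with_loops E r L E
        = dual_rank E r (E - {e}) - dual_rank E r E"
      by (simp add: dual_with_loops_eq)
    then have "e \<in> coloops E (dual_with_loops E r L) \<longleftrightarrow> e \<in> coloops E (dual_rank E r)"
      using True unfolding coloops_def by auto
    then show ?thesis using True by (simp add: coloops_dual_rank)
  next
    case not_in: False
    show ?thesis
    proof (cases "e \<in> L")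
      case True
      then have "E - {e} - L = E - L" by blast
      then show ?thesis using True by (simp add: coloops_def dual_with_loops_def)
    next
      case False
      then show ?thesis using not_in coloops_subset[of E] loops_subset[of E] by blast
    qed
  qed
qed

lemma core_ground_dual_with_loops: "core_ground E (dual_with_loops E r L) = core_ground E r"
  using L_loops
  by (auto simp: core_ground_def loops_dual_with_loops coloops_dual_with_loops)

lemma same_matroid_dual_with_loops:
  "same_matroid (core_ground E r) (dual_with_loops E r L) (dual_rank (core_ground E r) r)"
  unfolding same_matroid_def
proof (intro allI impI)
  fix X assume X: "X \<subseteq> core_ground E r"
  then have "X \<subseteq> E" "X \<inter> L = {}" using L_loops by (auto simp: core_ground_def)
  then show "dual_with_loops E r L X = dual_rank (core_ground E r) r X"
    by (simp add: dual_with_loops_eq dual_rank_core_ground[OF X])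
qed

end

end

section \<open>Decompositions of the i-dual\<close>

lemma finite_matroid_sum_of_matroids:
  "finite E \<Longrightarrow> sum_of_matroids E \<rho> k M \<Longrightarrow> s < k \<Longrightarrow> finite_matroid E (M s)"
  by (simp add: sum_of_matroids_def finite_matroid_def)

lemma sum_dual_rank:
  assumes "sum_of_matroids E \<rho> k M" and "X \<subseteq> E"
  shows "(\<Sum>s<k. dual_rank E (M s) X) = int k * int (card X) - \<rho> E + \<rho> (E - X)"
proof -
  have "\<rho> E = (\<Sum>s<k. M s E)" "\<rho> (E - X) = (\<Sum>s<k. M s (E - X))"
    using assms unfolding sum_of_matroids_def by auto
  then show ?thesis by (simp add: dual_rank_def sum.distrib sum_subtractf)
qed

lemma sum_of_matroids_dual_rank:
  assumes "finite E" and "sum_of_matroids E \<rho> i M"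
  shows "sum_of_matroids E (i_dual i E \<rho>) i (\<lambda>s. dual_rank E (M s))"
  unfolding sum_of_matroids_def
proof (intro conjI allI impI)
  fix s assume "s < i"
  then have "finite_matroid E (dual_rank E (M s))"
    using finite_matroid.dual_matroid finite_matroid_sum_of_matroids assms by blast
  then show "is_matroid_rank E (dual_rank E (M s))" by (simp add: finite_matroid_def)
next
  fix X assume "X \<subseteq> E"
  then show "i_dual i E \<rho> X = (\<Sum>s<i. dual_rank E (M s) X)"
    using sum_dual_rank[OF assms(2)] by (simp add: i_dual_def)
qed

lemma singleton_eq_card_nonloops:
  assumes "sum_of_matroids E \<rho> k M" and "e \<in> E"
  shows "\<rho> {e} = int (card {s. s < k \<and> e \<notin> loops E (M s)})"
proof -
  have rank_e: "M s {e} = (if e \<notin> loops E (M s) then 1 else 0)" if "s < k" for s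
  proof -
    have "is_matroid_rank E (M s)" using assms(1) that by (simp add: sum_of_matroids_def)
    then have "0 \<le> M s {e}" "M s {e} \<le> 1" using assms(2) by (auto simp: is_matroid_rank_def)
    then show ?thesis using assms(2) by (auto simp: loops_def)
  qed
  have "\<rho> {e} = (\<Sum>s<k. M s {e})" using assms by (simp add: sum_of_matroids_def)
  also have "\<dots> = (\<Sum>s<k. if e \<notin> loops E (M s) then 1 else 0)"
    by (rule sum.cong[OF refl]) (simp add: rank_e)
  also have "\<dots> = (\<Sum>s \<in> {s \<in> {..<k}. e \<notin> loops E (M s)}. 1)"
    by (rule sum.inter_filter[symmetric]) simp
  finally show ?thesis by simp
qed

lemma obtain_loop_sets:
  assumes "finite E" and "\<forall>e\<in>E. \<rho> {e} \<le> int i" and "sum_of_matroids E \<rho> k M"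
  obtains L where "\<And>s. L s \<subseteq> loops E (M s)"
    and "\<And>X. X \<subseteq> E \<Longrightarrow> (\<Sum>s<k. card (X \<inter> L s)) = (k - i) * card X"
proof -
  have "\<exists>T. T \<subseteq> {s. s < k \<and> e \<in> loops E (M s)} \<and> card T = k - i" if "e \<in> E" for e
  proof -
    let ?loop = "{s. s < k \<and> e \<in> loops E (M s)}" and ?nonloop = "{s. s < k \<and> e \<notin> loops E (M s)}"
    have "?loop \<union> ?nonloop = {..<k}" "?loop \<inter> ?nonloop = {}" by auto
    then have "card ?loop + card ?nonloop = k"
      using card_Un_disjoint[of ?loop ?nonloop] by simp
    moreover have "\<rho> {e} \<le> int i" using assms(2) that by blast
    then have "card ?nonloop \<le> i"
      using singleton_eq_card_nonloops[OF assms(3) that] by simp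
    ultimately have "k - i \<le> card ?loop" by linarith
    then obtain T where "T \<subseteq> ?loop" "card T = k - i" by (rule obtain_subset_with_card_n)
    then show ?thesis by blast
  qed
  then have "\<exists>T. \<forall>e\<in>E. T e \<subseteq> {s. s < k \<and> e \<in> loops E (M s)} \<and> card (T e) = k - i"
    by (intro bchoice) blast
  then obtain T where T: "\<And>e. e \<in> E \<Longrightarrow> T e \<subseteq> {s. s < k \<and> e \<in> loops E (M s)} \<and> card (T e) = k - i"
    by blast
  define L where "L s = {e \<in> E. s \<in> T e}" for s
  show thesis
  proof
    show "L s \<subseteq> loops E (M s)" for s using T by (auto simp: L_def)
  next
    fix X assume X: "X \<subseteq> E"
    have "X \<inter> L s = {e \<in> X. s \<in> T e}" for s using X by (auto simp: L_def)
    then have "(\<Sum>s<k. card (X \<inter> L s)) = (\<Sum>s<k. card {e \<in> X. s \<in> T e})" by simp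
    also have "\<dots> = (k - i) * card X"
    proof (rule sum_multicount)
      show "finite X" using finite_subset[OF X assms(1)] .
      show "\<forall>e\<in>X. card {s \<in> {..<k}. s \<in> T e} = k - i"
      proof
        fix e assume "e \<in> X"
        then have "{s \<in> {..<k}. s \<in> T e} = T e" "card (T e) = k - i" using T X by auto
        then show "card {s \<in> {..<k}. s \<in> T e} = k - i" by simp
      qed
    qed simp
    finally show "(\<Sum>s<k. card (X \<inter> L s)) = (k - i) * card X" .
  qed
qed

lemma sum_of_matroids_i_dual:
  assumes "finite E" and "\<forall>e\<in>E. \<rho> {e} \<le> int i" and "sum_of_matroids E \<rho> k M" and "i \<le> k"
  shows "\<exists>M'. sum_of_matroids E (i_dual i E \<rho>) k M' \<and>
           (\<forall>s<k. core_ground E (M' s) = core_ground E (M s) \<and>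
              same_matroid (core_ground E (M s)) (M' s) (dual_rank (core_ground E (M s)) (M s)))"
proof -
  obtain L where L: "\<And>s. L s \<subseteq> loops E (M s)"
    and count: "\<And>X. X \<subseteq> E \<Longrightarrow> (\<Sum>s<k. card (X \<inter> L s)) = (k - i) * card X"
    using obtain_loop_sets[OF assms(1-3)] by blast
  define M' where "M' s = dual_with_loops E (M s) (L s)" for s
  have matroid: "finite_matroid E (M s)" if "s < k" for s
    using finite_matroid_sum_of_matroids[OF assms(1,3) that] .
  have "i_dual i E \<rho> X = (\<Sum>s<k. M' s X)" if X: "X \<subseteq> E" for X
  proof -
    have "(\<Sum>s<k. M' s X) = (\<Sum>s<k. dual_rank E (M s) X - int (card (X \<inter> L s)))"
      by (rule sum.cong[OF refl])
        (simp add: M'_def finite_matroid.dual_with_loops_eq[OF matroid L X])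
    also have "\<dots> = int k * int (card X) - \<rho> E + \<rho> (E - X) - int ((k - i) * card X)"
      by (simp add: sum_subtractf sum_dual_rank[OF assms(3) X] count[OF X] flip: of_nat_sum)
    also have "\<dots> = i_dual i E \<rho> X"
      using assms(4) by (simp add: i_dual_def of_nat_diff algebra_simps)
    finally show ?thesis by simp
  qed
  moreover have "finite_matroid E (M' s)" if "s < k" for s
    using finite_matroid.dual_with_loops_matroid[OF matroid[OF that]] by (simp add: M'_def)
  ultimately have "sum_of_matroids E (i_dual i E \<rho>) k M'"
    by (simp add: sum_of_matroids_def finite_matroid_def)
  moreover have "core_ground E (M' s) = core_ground E (M s) \<and>
      same_matroid (core_ground E (M s)) (M' s) (dual_rank (core_ground E (M s)) (M s))"
    if "s < k" for s
    using finite_matroid.core_ground_dual_with_loops[OF matroid[OF that] L]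
      finite_matroid.same_matroid_dual_with_loops[OF matroid[OF that] L]
    by (simp add: M'_def)
  ultimately show ?thesis by blast
qed

section \<open>Chromatic number\<close>

lemma i_dual_i_dual:
  assumes "finite E" and "\<rho> {} = 0" and "X \<subseteq> E"
  shows "i_dual i E (i_dual i E \<rho>) X = \<rho> X"
proof -
  have "E - (E - X) = X" using assms(3) by blast
  moreover have "finite X" using finite_subset[OF assms(3,1)] .
  then have "card (E - X) = card E - card X" "card X \<le> card E"
    using assms by (simp_all add: card_Diff_subset card_mono)
  ultimately show ?thesis using assms(2) by (simp add: i_dual_def of_nat_diff algebra_simps)
qed

lemma i_dual_singleton_le:
  assumes "is_polymatroid E \<rho>" and "e \<in> E"
  shows "i_dual i E \<rho> {e} \<le> int i"
  using assms by (simp add: is_polymatroid_def i_dual_def)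

lemma sum_of_matroids_cong:
  assumes "\<And>X. X \<subseteq> E \<Longrightarrow> \<rho> X = \<rho>' X"
  shows "sum_of_matroids E \<rho> k M \<longleftrightarrow> sum_of_matroids E \<rho>' k M"
  using assms by (simp add: sum_of_matroids_def)

lemma ex_sum_of_matroids_i_dual_iff:
  assumes "finite E" and "is_i_polymatroid i E \<rho>" and "i \<le> k"
  shows "(\<exists>M. sum_of_matroids E (i_dual i E \<rho>) k M) \<longleftrightarrow> (\<exists>M. sum_of_matroids E \<rho> k M)"
proof -
  have \<rho>: "is_polymatroid E \<rho>" "\<forall>e\<in>E. \<rho> {e} \<le> int i"
    using assms(2) by (auto simp: is_i_polymatroid_def)
  have dual: "\<forall>e\<in>E. i_dual i E \<rho> {e} \<le> int i" using i_dual_singleton_le[OF \<rho>(1)] by blast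
  have "\<rho> {} = 0" using \<rho>(1) by (simp add: is_polymatroid_def)
  then have double_dual:
      "sum_of_matroids E (i_dual i E (i_dual i E \<rho>)) k M \<longleftrightarrow> sum_of_matroids E \<rho> k M"
    for M by (intro sum_of_matroids_cong i_dual_i_dual[OF assms(1)])
  show ?thesis
    using sum_of_matroids_i_dual[OF assms(1) \<rho>(2) _ assms(3)]
      sum_of_matroids_i_dual[OF assms(1) dual _ assms(3)] double_dual
    by metis
qed

lemma le_chromatic_number_imp_le:
  assumes "enat i \<le> chromatic_number E \<rho>" and "0 < k" and "sum_of_matroids E \<rho> k M"
  shows "i \<le> k"
proof -
  let ?P = "\<lambda>k. 0 < k \<and> (\<exists>M. sum_of_matroids E \<rho> k M)"
  have "chromatic_number E \<rho> = enat (LEAST k. ?P k)"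
    using assms(2,3) by (auto simp: chromatic_number_def)
  moreover have "(LEAST k. ?P k) \<le> k" using assms(2,3) by (blast intro: Least_le)
  ultimately show ?thesis using assms(1) by simp
qed

lemma chromatic_number_cong:
  assumes "\<And>k. 0 < k \<Longrightarrow> (\<exists>M. sum_of_matroids E \<rho> k M) \<longleftrightarrow> (\<exists>M. sum_of_matroids E \<rho>' k M)"
  shows "chromatic_number E \<rho> = chromatic_number E \<rho>'"
proof -
  have "(0 < k \<and> (\<exists>M. sum_of_matroids E \<rho> k M)) \<longleftrightarrow> (0 < k \<and> (\<exists>M. sum_of_matroids E \<rho>' k M))"
    for k using assms by blast
  then show ?thesis unfolding chromatic_number_def by simp
qed

theorem theorem4p1:
  fixes E :: "'a set" and \<rho> :: "'a set \<Rightarrow> int" and i :: nat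
  assumes "finite E" and "is_i_polymatroid i E \<rho>"
  shows "(\<forall>M. sum_of_matroids E \<rho> i M \<longrightarrow>
            sum_of_matroids E (i_dual i E \<rho>) i (\<lambda>s. dual_rank E (M s)))
       \<and> (\<forall>k M. k \<ge> i \<and> sum_of_matroids E \<rho> k M \<longrightarrow>
            (\<exists>M'. sum_of_matroids E (i_dual i E \<rho>) k M' \<and>
               (\<forall>s<k. core_ground E (M' s) = core_ground E (M s) \<and>
                  same_matroid (core_ground E (M s)) (M' s)
                    (dual_rank (core_ground E (M s)) (M s)))))
       \<and> (min (chromatic_number E \<rho>) (chromatic_number E (i_dual i E \<rho>)) \<ge> enat i \<longrightarrow>
            chromatic_number E \<rho> = chromatic_number E (i_dual i E \<rho>))"
proof (intro conjI allI impI)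
  fix M assume "sum_of_matroids E \<rho> i M"
  then show "sum_of_matroids E (i_dual i E \<rho>) i (\<lambda>s. dual_rank E (M s))"
    using sum_of_matroids_dual_rank[OF assms(1)] by blast
next
  fix k M assume "i \<le> k \<and> sum_of_matroids E \<rho> k M"
  then show "\<exists>M'. sum_of_matroids E (i_dual i E \<rho>) k M' \<and>
      (\<forall>s<k. core_ground E (M' s) = core_ground E (M s) \<and>
         same_matroid (core_ground E (M s)) (M' s) (dual_rank (core_ground E (M s)) (M s)))"
    using sum_of_matroids_i_dual[OF assms(1)] assms(2) by (auto simp: is_i_polymatroid_def)
next
  assume "enat i \<le> min (chromatic_number E \<rho>) (chromatic_number E (i_dual i E \<rho>))"
  then have "enat i \<le> chromatic_number E \<rho>" "enat i \<le> chromatic_number E (i_dual i E \<rho>)"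
    by simp_all
  then have "(\<exists>M. sum_of_matroids E \<rho> k M) \<longleftrightarrow> (\<exists>M. sum_of_matroids E (i_dual i E \<rho>) k M)"
    if "0 < k" for k
    using ex_sum_of_matroids_i_dual_iff[OF assms, of k] le_chromatic_number_imp_le[OF _ that]
    by metis
  then show "chromatic_number E \<rho> = chromatic_number E (i_dual i E \<rho>)"
    by (rule chromatic_number_cong)
qed

end
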